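(* Fix $K$ and let $(\hat Z_K,\hat J_K)$ be a solution of $$\min_{Z\in\mathcal M_{n,K},\,J}\Big\{\sum_{k,l=1}^K\big\|A^{(k,l)}(Z,K)-\Pi_{(1)}\big(\Pi_{J^{(k,l)}}(A^{(k,l)}(Z,K))\big)\big\|_F^2+\mathrm{Pen}(n,J,K)\Big\},$$ where $J$ ranges over sparsity families for $(Z,K)$. Suppose that either $\mathrm{Pen}(n,J,K)$ is an increasing function of $|J|$ (non-separable penalty), or $\mathrm{Pen}$ is separable and increasing in each $|J_{k,l}|$, $k,l=1,\dots,K$. Then, writing $\hat J=\hat J_K$, $$\hat J_{k,l}(\hat Z_K,K)\subseteq\breve J_{k,l}(\hat Z_K,K)\subseteq(\breve J_* )_{k,l}(\hat Z_K,K)\quad\text{for all }k,l,$$ and $\hat J(\hat Z_K,K)\subseteq\breve J(\hat Z_K,K)\subseteq\breve J_*(\hat Z_K,K)$.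
   Context: $A\in\{0,1\}^{n\times n}$ symmetric, $A_{ij}\sim\mathrm{Bernoulli}((P_* )_{ij})$ independent for $i\le j$, $P_*$ symmetric. $\mathcal M_{n,K}$: clustering matrices $Z\in\{0,1\}^{n\times K}$ (one $1$ per row) assigning node $i$ to community $\mathcal N_k$ iff $Z_{ik}=1$, sizes $n_k$. For $B\in\mathbb R^{n\times n}$, $B^{(k,l)}(Z,K)\in\mathbb R^{n_k\times n_l}$ is the submatrix with rows indexed by $\mathcal N_k$ and columns by $\mathcal N_l$ (after reordering nodes by community). A sparsity family for $(Z,K)$ is $J=(J_{k,l})_{k,l=1}^K$ with $J_{k,l}\subseteq\mathcal N_k$; $J^{(k,l)}=J_{k,l}\times J_{l,k}$; $|J|=\sum_{k,l}|J_{k,l}|$; inclusions between families are meant componentwise. $\Pi_{J^{(k,l)}}(X)$ sets entries outside $J^{(k,l)}$ to zero and $\Pi_{(1)}(X)$ is the best rank-one approximation. A penalty is separable if $\mathrm{Pen}(n,J,K)=\sum_{k,l=1}^K\mathscr F(|J_{k,l}|,n_k)+\mathrm{Pen}^{(1)}(n,K)$ for some functions $\mathscr F,\mathrm{Pen}^{(1)}$; otherwise non-separable. $\breve J_{k,l}(Z,K)=\{i\in\mathcal N_k:A^{(k,l)}_{ij}(Z,K)\ne0\text{ for some }j\}$ and $(\breve J_* )_{k,l}(Z,K)=\{i\in\mathcal N_k:(P_* )^{(k,l)}_{ij}(Z,K)\ne0\text{ for some }j\}$; $\breve J$, $\breve J_*$ denote the corresponding families. *)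

theory Defs
  imports "HOL-Probability.Probability"
begin

type_synonym mat = "nat \<Rightarrow> nat \<Rightarrow> real"
type_synonym family = "nat \<Rightarrow> nat \<Rightarrow> nat set"

text \<open>Nodes are 0..<n, communities 0..<K. A clustering is z with z i < K; node i is in
  community k iff z i = k (equivalently Z_{ik} = 1).\<close>
definition valid_clust :: "nat \<Rightarrow> nat \<Rightarrow> (nat \<Rightarrow> nat) \<Rightarrow> bool" where
  "valid_clust n K z \<longleftrightarrow> (\<forall>i<n. z i < K)"

definition comm :: "nat \<Rightarrow> (nat \<Rightarrow> nat) \<Rightarrow> nat \<Rightarrow> nat set" where
  "comm n z k = {i. i < n \<and> z i = k}"

definition valid_family :: "nat \<Rightarrow> nat \<Rightarrow> (nat \<Rightarrow> nat) \<Rightarrow> family \<Rightarrow> bool" where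
  "valid_family n K z J \<longleftrightarrow> (\<forall>k<K. \<forall>l<K. J k l \<subseteq> comm n z k)"

definition family_card :: "nat \<Rightarrow> family \<Rightarrow> nat" where
  "family_card K J = (\<Sum>k<K. \<Sum>l<K. card (J k l))"

definition frob2 :: "nat set \<Rightarrow> nat set \<Rightarrow> mat \<Rightarrow> real" where
  "frob2 R C X = (\<Sum>i\<in>R. \<Sum>j\<in>C. (X i j)\<^sup>2)"

definition proj_supp :: "nat set \<Rightarrow> nat set \<Rightarrow> mat \<Rightarrow> mat" where
  "proj_supp R' C' X = (\<lambda>i j. if i \<in> R' \<and> j \<in> C' then X i j else 0)"

definition rank_le1 :: "nat set \<Rightarrow> nat set \<Rightarrow> mat \<Rightarrow> bool" where
  "rank_le1 R C M \<longleftrightarrow> (\<exists>u v. \<forall>i\<in>R. \<forall>j\<in>C. M i j = u i * v j)"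

definition best_rank1 :: "nat set \<Rightarrow> nat set \<Rightarrow> mat \<Rightarrow> mat" where
  "best_rank1 R C Y = (SOME M. rank_le1 R C M \<and> (\<forall>i j. \<not> (i \<in> R \<and> j \<in> C) \<longrightarrow> M i j = 0)
       \<and> (\<forall>M'. rank_le1 R C M' \<longrightarrow>
              frob2 R C (\<lambda>i j. Y i j - M i j) \<le> frob2 R C (\<lambda>i j. Y i j - M' i j)))"

definition fit :: "nat \<Rightarrow> nat \<Rightarrow> mat \<Rightarrow> (nat \<Rightarrow> nat) \<Rightarrow> family \<Rightarrow> real" where
  "fit n K A z J = (\<Sum>k<K. \<Sum>l<K.
      (let R = comm n z k; C = comm n z l;
           M = best_rank1 R C (proj_supp (J k l) (J l k) A)
       in frob2 R C (\<lambda>i j. A i j - M i j)))"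

definition breve :: "nat \<Rightarrow> mat \<Rightarrow> (nat \<Rightarrow> nat) \<Rightarrow> nat \<Rightarrow> nat \<Rightarrow> nat set" where
  "breve n X z k l = {i \<in> comm n z k. \<exists>j \<in> comm n z l. X i j \<noteq> 0}"

text \<open>Distribution of the symmetric adjacency matrix: A_ij ~ Bernoulli(P_ij) independent
  for i \<le> j < n, A_ji = A_ij; entries outside the index range are 0.\<close>
definition adj_pmf :: "nat \<Rightarrow> mat \<Rightarrow> mat pmf" where
  "adj_pmf n P = map_pmf
     (\<lambda>b i j. if i < n \<and> j < n then (if b (min i j, max i j) then 1 else 0) else 0)
     (Pi_pmf {(i, j). i \<le> j \<and> j < n} False (\<lambda>(i, j). bernoulli_pmf (P i j)))"

end

theory Submission
  imports Defs
begin

text \<open>If row \<open>i\<close> of block \<open>(k, l)\<close> of the realised adjacency matrix is zero, dropping \<open>i\<close>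
  from \<open>J\<^sub>k\<^sub>,\<^sub>l\<close> leaves every projected block, hence the fit term, unchanged (by symmetry of \<open>A\<close>
  this also covers the column \<open>i\<close> of block \<open>(l, k)\<close>), while an increasing penalty strictly
  decreases. So a minimiser only keeps rows that are nonzero in \<open>A\<close>, and an entry of \<open>A\<close> can
  only be nonzero where the Bernoulli parameter in \<open>P\<^sub>*\<close> is.\<close>

lemma True_notin_set_bernoulli_pmf_0: "True \<notin> set_pmf (bernoulli_pmf 0)"
  by (simp add: set_pmf_iff)

lemma adj_pmf_sample:
  assumes "A \<in> set_pmf (adj_pmf n P)"
  obtains b where
    "\<And>i j. i \<le> j \<Longrightarrow> j < n \<Longrightarrow> b (i, j) \<in> set_pmf (bernoulli_pmf (P i j))"
    "A = (\<lambda>i j. if i < n \<and> j < n then (if b (min i j, max i j) then 1 else 0) else 0)"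
proof -
  define S where "S = {(i, j). i \<le> j \<and> j < n}"
  have "finite S"
    unfolding S_def by (rule finite_subset[of _ "{..<n} \<times> {..<n}"]) auto
  obtain b where b: "b \<in> set_pmf (Pi_pmf S False (\<lambda>(i, j). bernoulli_pmf (P i j)))"
    and "A = (\<lambda>i j. if i < n \<and> j < n then (if b (min i j, max i j) then 1 else 0) else 0)"
    using assms unfolding adj_pmf_def S_def by auto
  moreover have "b (i, j) \<in> set_pmf (bernoulli_pmf (P i j))" if "i \<le> j" "j < n" for i j
    using b that \<open>finite S\<close> by (auto simp: set_Pi_pmf PiE_dflt_def S_def)
  ultimately show ?thesis
    using that by blast
qed

lemma adj_pmf_symmetric:
  assumes "A \<in> set_pmf (adj_pmf n P)"
  shows "A i j = A j i"
proof -
  obtain b where "A = (\<lambda>i j. if i < n \<and> j < n then (if b (min i j, max i j) then 1 else 0) else 0)"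
    using assms by (rule adj_pmf_sample)
  then show ?thesis
    by (simp add: min.commute max.commute)
qed

lemma adj_pmf_nonzero_imp_prob_nonzero:
  assumes "A \<in> set_pmf (adj_pmf n P)" and "\<forall>i<n. \<forall>j<n. P i j = P j i" and "A i j \<noteq> 0"
  shows "P i j \<noteq> 0"
proof -
  obtain b where b: "\<And>i j. i \<le> j \<Longrightarrow> j < n \<Longrightarrow> b (i, j) \<in> set_pmf (bernoulli_pmf (P i j))"
    and A: "A = (\<lambda>i j. if i < n \<and> j < n then (if b (min i j, max i j) then 1 else 0) else 0)"
    using assms(1) by (rule adj_pmf_sample) blast
  from \<open>A i j \<noteq> 0\<close> have ij: "i < n" "j < n" and "b (min i j, max i j)"
    unfolding A by (auto split: if_splits)
  with b[of "min i j" "max i j"] have "P (min i j) (max i j) \<noteq> 0"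
    using True_notin_set_bernoulli_pmf_0 by fastforce
  with assms(2) ij show ?thesis
    by (cases "i \<le> j") (auto simp: min_def max_def)
qed

lemma breve_mono:
  assumes "\<And>i j. X i j \<noteq> 0 \<Longrightarrow> Y i j \<noteq> 0"
  shows "breve n X z k l \<subseteq> breve n Y z k l"
  using assms unfolding breve_def by blast

definition family_remove :: "family \<Rightarrow> nat \<Rightarrow> nat \<Rightarrow> nat \<Rightarrow> family" where
  "family_remove J k l i = J(k := (J k)(l := J k l - {i}))"

lemma valid_family_remove:
  "valid_family n K z J \<Longrightarrow> valid_family n K z (family_remove J k l i)"
  unfolding valid_family_def family_remove_def by auto

lemma card_family_remove_le:
  assumes "finite (J k l)"
  shows "card (family_remove J k l i a b) \<le> card (J a b)"
  using assms unfolding family_remove_def by (auto intro: card_mono)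

lemma card_family_remove_less:
  assumes "finite (J k l)" and "i \<in> J k l"
  shows "card (family_remove J k l i k l) < card (J k l)"
  using card_Diff1_less[OF assms] unfolding family_remove_def by simp

lemma fit_family_remove_zero_row:
  assumes J: "valid_family n K z J" and "k < K" "l < K"
    and A_sym: "\<And>i j. A i j = A j i"
    and row: "i \<in> comm n z k" "i \<notin> breve n A z k l"
  shows "fit n K A z (family_remove J k l i) = fit n K A z J"
proof -
  have zero: "A i j = 0" "A j i = 0" if "j \<in> comm n z l" for j
    using row that A_sym unfolding breve_def by auto
  have "J l k \<subseteq> comm n z l"
    using J \<open>k < K\<close> \<open>l < K\<close> unfolding valid_family_def by auto
  then have "proj_supp (family_remove J k l i a b) (family_remove J k l i b a) A
      = proj_supp (J a b) (J b a) A" for a b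
    unfolding proj_supp_def family_remove_def using zero row(1)
    by (auto simp: fun_eq_iff comm_def)
  then show ?thesis
    unfolding fit_def by simp
qed

lemma sum_sum_strict_mono:
  fixes f g :: "nat \<Rightarrow> nat \<Rightarrow> 'a::ordered_cancel_comm_monoid_add"
  assumes "\<And>a b. f a b \<le> g a b" and "k < K" "l < K" "f k l < g k l"
  shows "(\<Sum>a<K. \<Sum>b<K. f a b) < (\<Sum>a<K. \<Sum>b<K. g a b)"
proof (rule sum_strict_mono_ex1)
  show "\<forall>a\<in>{..<K}. (\<Sum>b<K. f a b) \<le> (\<Sum>b<K. g a b)"
    using assms(1) by (simp add: sum_mono)
  have "(\<Sum>b<K. f k b) < (\<Sum>b<K. g k b)"
    using assms by (intro sum_strict_mono_ex1) auto
  then show "\<exists>a\<in>{..<K}. (\<Sum>b<K. f a b) < (\<Sum>b<K. g a b)"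
    using \<open>k < K\<close> by blast
qed simp

lemma penalty_strict_mono:
  fixes pen :: "(nat \<Rightarrow> nat) \<Rightarrow> family \<Rightarrow> real"
  assumes pen_form:
      "(\<exists>g :: nat \<Rightarrow> real. strict_mono g \<and> (\<forall>z J. pen z J = g (family_card K J)))
       \<or> (\<exists>(F :: nat \<Rightarrow> nat \<Rightarrow> real) (P1 :: real). (\<forall>a b m. a < b \<longrightarrow> F a m < F b m) \<and>
            (\<forall>z J. pen z J = (\<Sum>k<K. \<Sum>l<K. F (card (J k l)) (card (comm n z k))) + P1))"
    and le: "\<And>a b. card (J' a b) \<le> card (J a b)"
    and less: "k < K" "l < K" "card (J' k l) < card (J k l)"
  shows "pen z J' < pen z J"
  using pen_form
proof (elim disjE exE conjE)
  fix g :: "nat \<Rightarrow> real"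
  assume "strict_mono g" and "\<forall>z J. pen z J = g (family_card K J)"
  moreover have "family_card K J' < family_card K J"
    unfolding family_card_def using le less by (rule sum_sum_strict_mono)
  ultimately show ?thesis
    by (simp add: strict_monoD)
next
  fix F :: "nat \<Rightarrow> nat \<Rightarrow> real" and P1
  assume F: "\<forall>a b m. a < b \<longrightarrow> F a m < F b m"
    and pen: "\<forall>z J. pen z J = (\<Sum>k<K. \<Sum>l<K. F (card (J k l)) (card (comm n z k))) + P1"
  have "F (card (J' a b)) (card (comm n z a)) \<le> F (card (J a b)) (card (comm n z a))" for a b
    using F le[of a b] by (cases "card (J' a b) = card (J a b)") (auto simp: order_less_imp_le)
  moreover have "F (card (J' k l)) (card (comm n z k)) < F (card (J k l)) (card (comm n z k))"
    using F less(3) by blast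
  ultimately have "(\<Sum>a<K. \<Sum>b<K. F (card (J' a b)) (card (comm n z a)))
      < (\<Sum>a<K. \<Sum>b<K. F (card (J a b)) (card (comm n z a)))"
    by (rule sum_sum_strict_mono[OF _ less(1,2)])
  then show ?thesis
    using pen by simp
qed

theorem lemma2:
  fixes n K :: nat and P A :: mat
    and pen :: "(nat \<Rightarrow> nat) \<Rightarrow> family \<Rightarrow> real"
    and zh :: "nat \<Rightarrow> nat" and Jh :: family
  assumes P_sym: "\<forall>i<n. \<forall>j<n. P i j = P j i"
    and P_prob: "\<forall>i<n. \<forall>j<n. 0 \<le> P i j \<and> P i j \<le> 1"
    and A_real: "A \<in> set_pmf (adj_pmf n P)"
    and pen_form:
      "(\<exists>g :: nat \<Rightarrow> real. strict_mono g \<and> (\<forall>z J. pen z J = g (family_card K J)))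
       \<or> (\<exists>(F :: nat \<Rightarrow> nat \<Rightarrow> real) (P1 :: real). (\<forall>a b m. a < b \<longrightarrow> F a m < F b m) \<and>
            (\<forall>z J. pen z J = (\<Sum>k<K. \<Sum>l<K. F (card (J k l)) (card (comm n z k))) + P1))"
    and zh_valid: "valid_clust n K zh"
    and Jh_valid: "valid_family n K zh Jh"
    and minimizer: "\<forall>z J. valid_clust n K z \<longrightarrow> valid_family n K z J \<longrightarrow>
        fit n K A zh Jh + pen zh Jh \<le> fit n K A z J + pen z J"
  shows "\<forall>k<K. \<forall>l<K. Jh k l \<subseteq> breve n A zh k l \<and> breve n A zh k l \<subseteq> breve n P zh k l"
proof (intro allI impI conjI)
  fix k l assume "k < K" "l < K"
  show "breve n A zh k l \<subseteq> breve n P zh k l"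
    using adj_pmf_nonzero_imp_prob_nonzero[OF A_real P_sym] by (rule breve_mono)
  show "Jh k l \<subseteq> breve n A zh k l"
  proof
    fix i assume i: "i \<in> Jh k l"
    have Jh_comm: "Jh k l \<subseteq> comm n zh k"
      using Jh_valid \<open>k < K\<close> \<open>l < K\<close> unfolding valid_family_def by auto
    then have "finite (Jh k l)"
      by (rule finite_subset) (simp add: comm_def)
    show "i \<in> breve n A zh k l"
    proof (rule ccontr)
      assume "i \<notin> breve n A zh k l"
      let ?J' = "family_remove Jh k l i"
      have "fit n K A zh ?J' = fit n K A zh Jh"
        using Jh_valid \<open>k < K\<close> \<open>l < K\<close> adj_pmf_symmetric[OF A_real] i Jh_comm
          \<open>i \<notin> breve n A zh k l\<close> by (intro fit_family_remove_zero_row) auto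
      moreover have "pen zh ?J' < pen zh Jh"
        using pen_form card_family_remove_le[of Jh k l, OF \<open>finite (Jh k l)\<close>] \<open>k < K\<close> \<open>l < K\<close>
          card_family_remove_less[of Jh k l, OF \<open>finite (Jh k l)\<close> i] by (rule penalty_strict_mono)
      moreover have "fit n K A zh Jh + pen zh Jh \<le> fit n K A zh ?J' + pen zh ?J'"
        using minimizer zh_valid valid_family_remove[OF Jh_valid] by blast
      ultimately show False
        by simp
    qed
  qed
qed

end
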